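(* Let $\mathbb{F}$, $\mathfrak g$, $\mathcal C$, $\mathcal C^{du}$, $M$ be as in the context, let $V$ be an object of $\mathcal C$. Then every $\mathfrak g$-invariant subspace $U$ of $V$ is $M$-invariant, i.e. $m_VU\subseteq U$ for all $m\in M$.
   Context: Let $\mathbb F$ be a field of characteristic $0$ and $\mathfrak g$ a Lie algebra over $\mathbb F$. $\mathcal C$: full subcategory of the category of $\mathfrak g$-modules, closed under isomorphism and submodules, containing a direct sum and a tensor product of any two objects and a one-dimensional trivial module, and such that only $0\in\mathfrak g$ acts as zero on all objects. $x_V$ = action of $x$ on $V$. Category of duals $\mathcal C^{du}$: for each object a point-separating subspace $V^{du}\subseteq V^*$ with $\phi\circ x_V\in V^{du}$ ($x\in\mathfrak g$, $\phi\in V^{du}$), $\psi\circ\alpha\in V^{du}$ for morphisms $\alpha:V\to W$ and $\psi\in W^{du}$, $(V\oplus W)^{du}=V^{du}\oplus W^{du}$, $V^{du}\otimes W^{du}\subseteq(V\otimes W)^{du}$. $End_{V^{du}}(V)=\{\varphi\in End(V):\phi\circ\varphi\in V^{du}\ \forall\phi\in V^{du}\}$. $Nat$: families $(m_V)_V$ over objects, $m_V\in End_{V^{du}}(V)$, with $\varphi\circ m_V=m_W\circ\varphi$ for all morphisms $\varphi:V\to W$ of $\mathcal C$. Tannaka monoid $M=\{m\in Nat:m_{V\otimes W}=m_V\otimes m_W$ for all objects $V,W$, $m_{V_0}=id_{V_0}$ for each one-dimensional trivial $V_0\}$. *)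

theory Defs
  imports Complex_Main
begin

text \<open>Concrete (record-based) g-modules over a field 'k, all living in a universe type 'v.  Maps are compared on carriers only.\<close>

record ('k, 'g, 'v) gmod =
  carr :: "'v set"
  zr   :: 'v
  ad   :: "'v \<Rightarrow> 'v \<Rightarrow> 'v"
  sm   :: "'k \<Rightarrow> 'v \<Rightarrow> 'v"
  act  :: "'g \<Rightarrow> 'v \<Rightarrow> 'v"

definition lie_algebra :: "('k::field \<Rightarrow> 'g::ab_group_add \<Rightarrow> 'g) \<Rightarrow> ('g \<Rightarrow> 'g \<Rightarrow> 'g) \<Rightarrow> bool" where
  "lie_algebra sg br \<longleftrightarrow>
     vector_space sg \<and>
     (\<forall>x y z. br (x + y) z = br x z + br y z) \<and>
     (\<forall>x y z. br x (y + z) = br x y + br x z) \<and>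
     (\<forall>c x y. br (sg c x) y = sg c (br x y)) \<and>
     (\<forall>c x y. br x (sg c y) = sg c (br x y)) \<and>
     (\<forall>x. br x x = 0) \<and>
     (\<forall>x y z. br x (br y z) + br y (br z x) + br z (br x y) = 0)"

definition vs :: "('k::field, 'g, 'v) gmod \<Rightarrow> bool" where
  "vs V \<longleftrightarrow>
     zr V \<in> carr V \<and>
     (\<forall>u\<in>carr V. \<forall>v\<in>carr V. ad V u v \<in> carr V) \<and>
     (\<forall>c. \<forall>u\<in>carr V. sm V c u \<in> carr V) \<and>
     (\<forall>u\<in>carr V. \<forall>v\<in>carr V. \<forall>w\<in>carr V. ad V (ad V u v) w = ad V u (ad V v w)) \<and>
     (\<forall>u\<in>carr V. \<forall>v\<in>carr V. ad V u v = ad V v u) \<and>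
     (\<forall>u\<in>carr V. ad V (zr V) u = u) \<and>
     (\<forall>u\<in>carr V. \<exists>v\<in>carr V. ad V u v = zr V) \<and>
     (\<forall>c. \<forall>u\<in>carr V. \<forall>v\<in>carr V. sm V c (ad V u v) = ad V (sm V c u) (sm V c v)) \<and>
     (\<forall>c d. \<forall>u\<in>carr V. sm V (c + d) u = ad V (sm V c u) (sm V d u)) \<and>
     (\<forall>c d. \<forall>u\<in>carr V. sm V (c * d) u = sm V c (sm V d u)) \<and>
     (\<forall>u\<in>carr V. sm V 1 u = u)"

definition lin :: "('k::field, 'g, 'v) gmod \<Rightarrow> ('k, 'g, 'v) gmod \<Rightarrow> ('v \<Rightarrow> 'v) \<Rightarrow> bool" where
  "lin V W f \<longleftrightarrow>
     (\<forall>u\<in>carr V. f u \<in> carr W) \<and>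
     (\<forall>u\<in>carr V. \<forall>v\<in>carr V. f (ad V u v) = ad W (f u) (f v)) \<and>
     (\<forall>c. \<forall>u\<in>carr V. f (sm V c u) = sm W c (f u))"

definition functional :: "('k::field, 'g, 'v) gmod \<Rightarrow> ('v \<Rightarrow> 'k) \<Rightarrow> bool" where
  "functional V \<phi> \<longleftrightarrow>
     (\<forall>u\<in>carr V. \<forall>v\<in>carr V. \<phi> (ad V u v) = \<phi> u + \<phi> v) \<and>
     (\<forall>c. \<forall>u\<in>carr V. \<phi> (sm V c u) = c * \<phi> u)"

definition gmodule :: "('k::field \<Rightarrow> 'g::ab_group_add \<Rightarrow> 'g) \<Rightarrow> ('g \<Rightarrow> 'g \<Rightarrow> 'g)
    \<Rightarrow> ('k, 'g, 'v) gmod \<Rightarrow> bool" where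
  "gmodule sg br V \<longleftrightarrow>
     vs V \<and> (\<forall>x. lin V V (act V x)) \<and>
     (\<forall>x y. \<forall>v\<in>carr V. act V (x + y) v = ad V (act V x v) (act V y v)) \<and>
     (\<forall>c x. \<forall>v\<in>carr V. act V (sg c x) v = sm V c (act V x v)) \<and>
     (\<forall>x y. \<forall>v\<in>carr V.
        act V (br x y) v = ad V (act V x (act V y v)) (sm V (-1) (act V y (act V x v))))"

definition hom :: "('k::field, 'g, 'v) gmod \<Rightarrow> ('k, 'g, 'v) gmod \<Rightarrow> ('v \<Rightarrow> 'v) \<Rightarrow> bool" where
  "hom V W f \<longleftrightarrow> lin V W f \<and> (\<forall>x. \<forall>v\<in>carr V. f (act V x v) = act W x (f v))"

definition iso :: "('k::field, 'g, 'v) gmod \<Rightarrow> ('k, 'g, 'v) gmod \<Rightarrow> ('v \<Rightarrow> 'v) \<Rightarrow> bool" where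
  "iso V W f \<longleftrightarrow> hom V W f \<and> bij_betw f (carr V) (carr W)"

definition invariant_subspace :: "'v set \<Rightarrow> ('k::field, 'g, 'v) gmod \<Rightarrow> bool" where
  "invariant_subspace S V \<longleftrightarrow>
     S \<subseteq> carr V \<and> zr V \<in> S \<and>
     (\<forall>u\<in>S. \<forall>v\<in>S. ad V u v \<in> S) \<and>
     (\<forall>c. \<forall>u\<in>S. sm V c u \<in> S) \<and>
     (\<forall>x. \<forall>u\<in>S. act V x u \<in> S)"

definition subm :: "('k, 'g, 'v) gmod \<Rightarrow> 'v set \<Rightarrow> ('k, 'g, 'v) gmod" where
  "subm V S = V\<lparr>carr := S\<rparr>"

definition trivial1 :: "('k::field \<Rightarrow> 'g::ab_group_add \<Rightarrow> 'g) \<Rightarrow> ('g \<Rightarrow> 'g \<Rightarrow> 'g)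
    \<Rightarrow> ('k, 'g, 'v) gmod \<Rightarrow> bool" where
  "trivial1 sg br V \<longleftrightarrow>
     gmodule sg br V \<and>
     (\<forall>x. \<forall>v\<in>carr V. act V x v = zr V) \<and>
     (\<exists>e\<in>carr V. e \<noteq> zr V \<and> (\<forall>v\<in>carr V. \<exists>c. v = sm V c e))"

definition is_dsum :: "('k::field \<Rightarrow> 'g::ab_group_add \<Rightarrow> 'g) \<Rightarrow> ('g \<Rightarrow> 'g \<Rightarrow> 'g)
    \<Rightarrow> ('k, 'g, 'v) gmod \<Rightarrow> ('k, 'g, 'v) gmod \<Rightarrow> ('k, 'g, 'v) gmod
    \<Rightarrow> ('v \<Rightarrow> 'v) \<Rightarrow> ('v \<Rightarrow> 'v) \<Rightarrow> ('v \<Rightarrow> 'v) \<Rightarrow> ('v \<Rightarrow> 'v) \<Rightarrow> bool" where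
  "is_dsum sg br V W D i1 i2 p1 p2 \<longleftrightarrow>
     gmodule sg br D \<and> hom V D i1 \<and> hom W D i2 \<and> hom D V p1 \<and> hom D W p2 \<and>
     (\<forall>v\<in>carr V. p1 (i1 v) = v) \<and> (\<forall>w\<in>carr W. p2 (i2 w) = w) \<and>
     (\<forall>v\<in>carr V. p2 (i1 v) = zr W) \<and> (\<forall>w\<in>carr W. p1 (i2 w) = zr V) \<and>
     (\<forall>d\<in>carr D. d = ad D (i1 (p1 d)) (i2 (p2 d)))"

definition bilinear_form :: "('k::field, 'g, 'v) gmod \<Rightarrow> ('k, 'g, 'v) gmod \<Rightarrow> ('v \<Rightarrow> 'v \<Rightarrow> 'k) \<Rightarrow> bool" where
  "bilinear_form V W \<beta> \<longleftrightarrow>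
     (\<forall>w\<in>carr W. functional V (\<lambda>v. \<beta> v w)) \<and> (\<forall>v\<in>carr V. functional W (\<lambda>w. \<beta> v w))"

definition is_tensor :: "('k::field \<Rightarrow> 'g::ab_group_add \<Rightarrow> 'g) \<Rightarrow> ('g \<Rightarrow> 'g \<Rightarrow> 'g)
    \<Rightarrow> ('k, 'g, 'v) gmod \<Rightarrow> ('k, 'g, 'v) gmod \<Rightarrow> ('k, 'g, 'v) gmod
    \<Rightarrow> ('v \<Rightarrow> 'v \<Rightarrow> 'v) \<Rightarrow> bool" where
  "is_tensor sg br V W T b \<longleftrightarrow>
     gmodule sg br T \<and>
     (\<forall>v\<in>carr V. \<forall>w\<in>carr W. b v w \<in> carr T) \<and>
     (\<forall>w\<in>carr W. lin V T (\<lambda>v. b v w)) \<and> (\<forall>v\<in>carr V. lin W T (\<lambda>w. b v w)) \<and>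
     (\<forall>x. \<forall>v\<in>carr V. \<forall>w\<in>carr W.
        act T x (b v w) = ad T (b (act V x v) w) (b v (act W x w))) \<and>
     (\<forall>\<beta>. bilinear_form V W \<beta> \<longrightarrow>
        (\<exists>l. functional T l \<and> (\<forall>v\<in>carr V. \<forall>w\<in>carr W. l (b v w) = \<beta> v w)) \<and>
        (\<forall>l1 l2. functional T l1 \<and> (\<forall>v\<in>carr V. \<forall>w\<in>carr W. l1 (b v w) = \<beta> v w) \<and>
                 functional T l2 \<and> (\<forall>v\<in>carr V. \<forall>w\<in>carr W. l2 (b v w) = \<beta> v w)
                 \<longrightarrow> (\<forall>t\<in>carr T. l1 t = l2 t)))"

text \<open>The category C (a set of objects; morphisms are all g-module homomorphisms).\<close>
definition good_category :: "('k::field_char_0 \<Rightarrow> 'g::ab_group_add \<Rightarrow> 'g) \<Rightarrow> ('g \<Rightarrow> 'g \<Rightarrow> 'g)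
    \<Rightarrow> ('k, 'g, 'v) gmod set \<Rightarrow> bool" where
  "good_category sg br C \<longleftrightarrow>
     (\<forall>V\<in>C. gmodule sg br V) \<and>
     (\<forall>V\<in>C. \<forall>W f. gmodule sg br W \<and> iso V W f \<longrightarrow> W \<in> C) \<and>
     (\<forall>V\<in>C. \<forall>S. invariant_subspace S V \<longrightarrow> subm V S \<in> C) \<and>
     (\<forall>V\<in>C. \<forall>W\<in>C. \<exists>D i1 i2 p1 p2. D \<in> C \<and> is_dsum sg br V W D i1 i2 p1 p2) \<and>
     (\<forall>V\<in>C. \<forall>W\<in>C. \<exists>T b. T \<in> C \<and> is_tensor sg br V W T b) \<and>
     (\<exists>V0\<in>C. trivial1 sg br V0) \<and>
     (\<forall>x. (\<forall>V\<in>C. \<forall>v\<in>carr V. act V x v = zr V) \<longrightarrow> x = 0)"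

definition in_du :: "(('k, 'g, 'v) gmod \<Rightarrow> ('v \<Rightarrow> 'k) set) \<Rightarrow> ('k, 'g, 'v) gmod \<Rightarrow> ('v \<Rightarrow> 'k) \<Rightarrow> bool" where
  "in_du du V \<phi> \<longleftrightarrow> (\<exists>\<psi>\<in>du V. \<forall>v\<in>carr V. \<phi> v = \<psi> v)"

definition category_of_duals :: "('k::field_char_0 \<Rightarrow> 'g::ab_group_add \<Rightarrow> 'g) \<Rightarrow> ('g \<Rightarrow> 'g \<Rightarrow> 'g)
    \<Rightarrow> ('k, 'g, 'v) gmod set \<Rightarrow> (('k, 'g, 'v) gmod \<Rightarrow> ('v \<Rightarrow> 'k) set) \<Rightarrow> bool" where
  "category_of_duals sg br C du \<longleftrightarrow>
     \<comment> \<open>V^du is a subspace of V^*\<close>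
     (\<forall>V\<in>C. (\<forall>\<phi>\<in>du V. functional V \<phi>) \<and> in_du du V (\<lambda>_. 0) \<and>
        (\<forall>\<phi>\<in>du V. \<forall>\<psi>\<in>du V. in_du du V (\<lambda>v. \<phi> v + \<psi> v)) \<and>
        (\<forall>c. \<forall>\<phi>\<in>du V. in_du du V (\<lambda>v. c * \<phi> v))) \<and>
     \<comment> \<open>V^du separates points\<close>
     (\<forall>V\<in>C. \<forall>v\<in>carr V. v \<noteq> zr V \<longrightarrow> (\<exists>\<phi>\<in>du V. \<phi> v \<noteq> 0)) \<and>
     \<comment> \<open>stable under the action\<close>
     (\<forall>V\<in>C. \<forall>x. \<forall>\<phi>\<in>du V. in_du du V (\<phi> \<circ> act V x)) \<and>
     \<comment> \<open>stable under pullback by morphisms\<close>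
     (\<forall>V\<in>C. \<forall>W\<in>C. \<forall>\<alpha>. hom V W \<alpha> \<longrightarrow> (\<forall>\<psi>\<in>du W. in_du du V (\<psi> \<circ> \<alpha>))) \<and>
     \<comment> \<open>(V \<oplus> W)^du = V^du \<oplus> W^du\<close>
     (\<forall>V\<in>C. \<forall>W\<in>C. \<forall>D\<in>C. \<forall>i1 i2 p1 p2. is_dsum sg br V W D i1 i2 p1 p2 \<longrightarrow>
        (\<forall>\<chi>. in_du du D \<chi> \<longleftrightarrow>
           (\<exists>\<phi> \<psi>. in_du du V \<phi> \<and> in_du du W \<psi> \<and>
              (\<forall>d\<in>carr D. \<chi> d = \<phi> (p1 d) + \<psi> (p2 d))))) \<and>
     \<comment> \<open>V^du \<otimes> W^du \<subseteq> (V \<otimes> W)^du\<close>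
     (\<forall>V\<in>C. \<forall>W\<in>C. \<forall>T\<in>C. \<forall>b. is_tensor sg br V W T b \<longrightarrow>
        (\<forall>\<phi>\<in>du V. \<forall>\<psi>\<in>du W. \<forall>l. functional T l \<and>
            (\<forall>v\<in>carr V. \<forall>w\<in>carr W. l (b v w) = \<phi> v * \<psi> w) \<longrightarrow> in_du du T l))"

definition endo_du :: "(('k::field, 'g, 'v) gmod \<Rightarrow> ('v \<Rightarrow> 'k) set) \<Rightarrow> ('k, 'g, 'v) gmod
    \<Rightarrow> ('v \<Rightarrow> 'v) \<Rightarrow> bool" where
  "endo_du du V f \<longleftrightarrow> lin V V f \<and> (\<forall>\<phi>\<in>du V. in_du du V (\<phi> \<circ> f))"

definition Nat :: "('k, 'g, 'v) gmod set \<Rightarrow> (('k::field, 'g, 'v) gmod \<Rightarrow> ('v \<Rightarrow> 'k) set)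
    \<Rightarrow> (('k, 'g, 'v) gmod \<Rightarrow> 'v \<Rightarrow> 'v) set" where
  "Nat C du = {m. (\<forall>V\<in>C. endo_du du V (m V)) \<and>
     (\<forall>V\<in>C. \<forall>W\<in>C. \<forall>f. hom V W f \<longrightarrow> (\<forall>v\<in>carr V. f (m V v) = m W (f v)))}"

definition tannaka_monoid :: "('k::field_char_0 \<Rightarrow> 'g::ab_group_add \<Rightarrow> 'g) \<Rightarrow> ('g \<Rightarrow> 'g \<Rightarrow> 'g)
    \<Rightarrow> ('k, 'g, 'v) gmod set \<Rightarrow> (('k, 'g, 'v) gmod \<Rightarrow> ('v \<Rightarrow> 'k) set)
    \<Rightarrow> (('k, 'g, 'v) gmod \<Rightarrow> 'v \<Rightarrow> 'v) set" where
  "tannaka_monoid sg br C du = {m \<in> Nat C du.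
     (\<forall>V\<in>C. \<forall>W\<in>C. \<forall>T\<in>C. \<forall>b. is_tensor sg br V W T b \<longrightarrow>
        (\<forall>v\<in>carr V. \<forall>w\<in>carr W. m T (b v w) = b (m V v) (m W w))) \<and>
     (\<forall>V0\<in>C. trivial1 sg br V0 \<longrightarrow> (\<forall>v\<in>carr V0. m V0 v = v))}"

end

theory Submission
  imports Defs
begin

text \<open>An invariant subspace U of V is itself an object of the category, and the inclusion
  U \<rightarrow> V is a morphism. Naturality of m along this inclusion gives m_V u = m_U u for u \<in> U,
  and m_U maps U into itself.\<close>

lemma carr_subm [simp]: "carr (subm V S) = S"
  by (simp add: subm_def)

lemma hom_subm_inclusion:
  assumes "S \<subseteq> carr V"
  shows "hom (subm V S) V (\<lambda>v. v)"
  using assms unfolding hom_def lin_def subm_def by auto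

lemma good_category_subm:
  assumes "good_category sg br C" and "V \<in> C" and "invariant_subspace S V"
  shows "subm V S \<in> C"
  using assms unfolding good_category_def by blast

lemma tannaka_monoid_subset_Nat: "tannaka_monoid sg br C du \<subseteq> Nat C du"
  unfolding tannaka_monoid_def by (rule Collect_restrict)

lemma Nat_restrict_subm:
  assumes "m \<in> Nat C du" and "V \<in> C" and "subm V S \<in> C" and "S \<subseteq> carr V" and "u \<in> S"
  shows "m V u = m (subm V S) u"
proof -
  have "\<forall>V\<in>C. \<forall>W\<in>C. \<forall>f. hom V W f \<longrightarrow> (\<forall>v\<in>carr V. f (m V v) = m W (f v))"
    using assms(1) by (simp add: Nat_def)
  then show ?thesis
    using assms(2,3,5) hom_subm_inclusion[OF assms(4)] by fastforce
qed

lemma Nat_maps_into_carr: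
  assumes "m \<in> Nat C du" and "V \<in> C" and "v \<in> carr V"
  shows "m V v \<in> carr V"
proof -
  have "endo_du du V (m V)"
    using assms(1,2) by (simp add: Nat_def)
  then show ?thesis
    using assms(3) by (simp add: endo_du_def lin_def)
qed

lemma Nat_preserves_subm:
  assumes "m \<in> Nat C du" and "V \<in> C" and "subm V S \<in> C" and "S \<subseteq> carr V" and "u \<in> S"
  shows "m V u \<in> S"
proof -
  have "m (subm V S) u \<in> S"
    using Nat_maps_into_carr[OF \<open>m \<in> Nat C du\<close> \<open>subm V S \<in> C\<close>] \<open>u \<in> S\<close> by simp
  then show ?thesis
    using Nat_restrict_subm[OF assms] by simp
qed

theorem proposition2p8:
  fixes sg :: "'k::field_char_0 \<Rightarrow> 'g::ab_group_add \<Rightarrow> 'g"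
    and br :: "'g \<Rightarrow> 'g \<Rightarrow> 'g"
    and C :: "('k, 'g, 'v) gmod set"
    and du :: "('k, 'g, 'v) gmod \<Rightarrow> ('v \<Rightarrow> 'k) set"
  assumes "lie_algebra sg br"
    and "good_category sg br C"
    and "category_of_duals sg br C du"
    and "V \<in> C"
    and "invariant_subspace U V"
  shows "\<forall>m \<in> tannaka_monoid sg br C du. \<forall>u\<in>U. m V u \<in> U"
proof (intro ballI)
  fix m u
  assume "m \<in> tannaka_monoid sg br C du" and "u \<in> U"
  have "m \<in> Nat C du"
    using \<open>m \<in> tannaka_monoid sg br C du\<close> tannaka_monoid_subset_Nat by blast
  moreover have "subm V U \<in> C"
    using good_category_subm assms(2,4,5) .
  moreover have "U \<subseteq> carr V"
    using assms(5) unfolding invariant_subspace_def by blast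
  ultimately show "m V u \<in> U"
    using Nat_preserves_subm \<open>V \<in> C\<close> \<open>u \<in> U\<close> by metis
qed

end
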